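(* Let $k\ge2$ be an integer and let $(D,X)$ be an instance of 3NodeCover with $|D|=n$ and $\bigcup_{d\in D}d=X$. Construct a digraph $G$ as follows: a vertex $v_d$ for each $d\in D$ (the set of these is $V_1$), a vertex $w_t$ for each $t\in X$ (the set of these is $V_2$), an edge $(v_d,w_t)$ whenever $t\in d$, an extra vertex $a$ with an edge $(a,v)$ for every $v\in V_1$, and for each $v\in V_1$ new vertices $v_1,\dots,v_{k-1}$ and the directed path $a\to v_1\to v_2\to\cdots\to v_{k-1}\to v$ of length $k$. Then $$S_k(G)=OPT_{3NC}+kn+\sum_{d\in D}|d|,$$ where $OPT_{3NC}$ is the optimum of the 3NodeCover instance.
   Context: An instance of 3NodeCover consists of a collection $D$ of subsets of a universe $X$, each subset having at most $3$ elements and each element of $X$ lying in at most $2$ subsets; $OPT_{3NC}$ is the minimum size of a subcollection $M\subseteq D$ with $\bigcup M=X$. For a digraph $G$, a $k$-TC-spanner is a digraph on $V(G)$ whose edges lie in the transitive closure of $G$ such that its directed distance from $u$ to $v$ is at most $k$ whenever $v$ is reachable from $u$ in $G$; $S_k(G)$ is the minimum number of edges of a $k$-TC-spanner. *)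

theory Defs
  imports Main
begin

definition is_3nc_instance :: "'a set set \<Rightarrow> 'a set \<Rightarrow> bool" where
  "is_3nc_instance D X \<longleftrightarrow> finite D \<and> (\<forall>d\<in>D. d \<subseteq> X \<and> card d \<le> 3 \<and> finite d)
     \<and> (\<forall>x\<in>X. card {d\<in>D. x \<in> d} \<le> 2)"

definition opt_3nc :: "'a set set \<Rightarrow> 'a set \<Rightarrow> nat" where
  "opt_3nc D X = Min {card M | M. M \<subseteq> D \<and> \<Union>M = X}"

definition is_tc_spanner :: "('v \<times> 'v) set \<Rightarrow> nat \<Rightarrow> ('v \<times> 'v) set \<Rightarrow> bool" where
  "is_tc_spanner E k H \<longleftrightarrow> H \<subseteq> E\<^sup>+ \<and> (\<forall>(u,v)\<in>E\<^sup>+. \<exists>j\<le>k. (u,v) \<in> H ^^ j)"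

definition S_k :: "nat \<Rightarrow> ('v \<times> 'v) set \<Rightarrow> nat" where
  "S_k k E = Min {card H | H. is_tc_spanner E k H}"

text \<open>Vertices of the constructed digraph: a, v_d, w_t, and path vertices (v_d)_i.\<close>
datatype 'a vtx = VA | VD "'a set" | WT 'a | PV "'a set" nat

definition nc_graph :: "nat \<Rightarrow> 'a set set \<Rightarrow> 'a set \<Rightarrow> ('a vtx \<times> 'a vtx) set" where
  "nc_graph k D X =
     {(VD d, WT t) | d t. d \<in> D \<and> t \<in> X \<and> t \<in> d}
   \<union> {(VA, VD d) | d. d \<in> D}
   \<union> {(VA, PV d 1) | d. d \<in> D}
   \<union> {(PV d i, PV d (Suc i)) | d i. d \<in> D \<and> 1 \<le> i \<and> Suc i \<le> k - 1}
   \<union> {(PV d (k - 1), VD d) | d. d \<in> D}"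

end

theory Submission
  imports Defs
begin

(*
  For any cover M of X, keep all edges of the n paths a -> v_d (kn edges),
  all element edges v_d -> w_t (sum of |d| edges) and the shortcuts a -> v_d for d in M.
  Every reachable pair is then joined by at most k edges.

  Let H be any k-TC-spanner. The k vertices of the path of d other than a
  (its block) each need an incoming H-edge, and all element edges v_d -> w_t must be in H.
  Call d heavy if its block receives more than k edges. The heavy sets, together with one
  set containing t for every shortcut edge into some w_t (an H-edge into w_t not starting
  at a set vertex v_d), cover X: an uncovered t could only be reached from a through some
  v_d whose block receives exactly k edges; but then the block is a chain with unique
  in-edges, so a -> v_d needs k steps and a -> w_t needs k + 1. Counting the three
  disjoint edge classes (block in-edges, element edges, shortcut edges) gives the bound.
*)

text \<open>Then G is a chain
  hanging from r, so every walk from r to v has at least |G| edges.\<close>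

lemma path_length_ge_card:
  assumes "finite G" and "r \<notin> G" and "v \<in> G" and "(r, v) \<in> H ^^ m"
    and "\<And>a. (a, r) \<notin> H"
    and "acyclic H"
    and "\<And>x a b. x \<in> G \<Longrightarrow> (a, x) \<in> H \<Longrightarrow> (b, x) \<in> H \<Longrightarrow> a = b"
    and "\<And>x a. x \<in> G \<Longrightarrow> (a, x) \<in> H \<Longrightarrow> a \<in> G \<or> a = r"
    and "\<And>y. y \<in> G \<Longrightarrow> (y, v) \<in> H\<^sup>*"
  shows "card G \<le> m"
  using assms
proof (induction m arbitrary: G v)
  case 0
  then show ?case by auto
next
  case (Suc m)
  note source = Suc.prems(5) and acyc = Suc.prems(6) and unique_pred = Suc.prems(7)
    and pred_closed = Suc.prems(8) and to_v = Suc.prems(9)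
  obtain u where ru: "(r, u) \<in> H ^^ m" and uv: "(u, v) \<in> H"
    using Suc.prems(4) by (rule relpow_Suc_E)
  \<comment> \<open>Every other vertex of G flows into v through u, the unique in-neighbour of v.\<close>
  have to_u: "(y, u) \<in> H\<^sup>*" if "y \<in> G" "y \<noteq> v" for y
  proof -
    obtain w where "(y, w) \<in> H\<^sup>*" "(w, v) \<in> H"
      using to_v[OF \<open>y \<in> G\<close>] \<open>y \<noteq> v\<close> by (meson rtranclD tranclD2)
    moreover have "w = u" using unique_pred[OF Suc.prems(3)] uv \<open>(w, v) \<in> H\<close> by blast
    ultimately show ?thesis by simp
  qed
  have no_cycle: "(x, x) \<notin> H\<^sup>+" for x using acyc by (simp add: acyclic_def)
  consider (root) "u = r" | (inner) "u \<in> G" using pred_closed[OF Suc.prems(3) uv] by blast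
  then show ?case
  proof cases
    case root
    \<comment> \<open>Nothing enters the source r \<notin> G, so G consists of v alone.\<close>
    have "G \<subseteq> {v}"
    proof
      fix y assume "y \<in> G"
      have "y = v \<or> y = r"
        using to_u[OF \<open>y \<in> G\<close>] source root by (metis rtranclE)
      then show "y \<in> {v}" using \<open>y \<in> G\<close> Suc.prems(2) by auto
    qed
    then show ?thesis using card_mono[of "{v}" G] by simp
  next
    case inner
    have "u \<noteq> v" using uv no_cycle by auto
    have "card (G - {v}) \<le> m"
    proof (rule Suc.IH)
      show "finite (G - {v})" "r \<notin> G - {v}" "u \<in> G - {v}" "(r, u) \<in> H ^^ m"
        using Suc.prems(1,2) inner \<open>u \<noteq> v\<close> ru by auto
      show "(a, r) \<notin> H" "acyclic H" for a using source acyc by auto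
      show "a = b" if "x \<in> G - {v}" "(a, x) \<in> H" "(b, x) \<in> H" for x a b
        using unique_pred that by blast
      show "a \<in> G - {v} \<or> a = r" if "x \<in> G - {v}" "(a, x) \<in> H" for x a
      proof -
        have "a \<noteq> v"
          using that to_v[of x] no_cycle[of v] by (auto intro: rtrancl_into_trancl2)
        then show ?thesis using pred_closed that by blast
      qed
      show "(y, u) \<in> H\<^sup>*" if "y \<in> G - {v}" for y using to_u that by blast
    qed
    then show ?thesis using Suc.prems(1,3) by (simp add: card_Suc_Diff1)
  qed
qed

text \<open>The path attached to d is a = x_0, x_1, ..., x_k = v_d; the term path_vtx k d i is x_i.
  Indexing the path uniformly (including both end points) keeps all later case analyses short.\<close>

definition path_vtx :: "nat \<Rightarrow> 'a set \<Rightarrow> nat \<Rightarrow> 'a vtx" where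
  "path_vtx k d i = (if i = 0 then VA else if i < k then PV d i else VD d)"

lemma path_vtx_0 [simp]: "path_vtx k d 0 = VA"
  by (simp add: path_vtx_def)

lemma path_vtx_top [simp]: "0 < k \<Longrightarrow> path_vtx k d k = VD d"
  by (simp add: path_vtx_def)

lemma path_vtx_neq_WT [simp]: "path_vtx k d i \<noteq> WT t" "WT t \<noteq> path_vtx k d i"
  by (simp_all add: path_vtx_def)

lemma path_vtx_eq_VA_iff [simp]:
  "i \<le> k \<Longrightarrow> 0 < k \<Longrightarrow> path_vtx k d i = VA \<longleftrightarrow> i = 0"
  "i \<le> k \<Longrightarrow> 0 < k \<Longrightarrow> VA = path_vtx k d i \<longleftrightarrow> i = 0"
  by (auto simp: path_vtx_def)

lemma path_vtx_eq_VD_iff [simp]: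
  "i \<le> k \<Longrightarrow> path_vtx k d i = VD d' \<longleftrightarrow> i = k \<and> 0 < k \<and> d' = d"
  "i \<le> k \<Longrightarrow> VD d' = path_vtx k d i \<longleftrightarrow> i = k \<and> 0 < k \<and> d' = d"
  by (auto simp: path_vtx_def)

lemma path_vtx_eq_iff:
  "i \<le> k \<Longrightarrow> j \<le> k \<Longrightarrow> path_vtx k d i = path_vtx k d' j \<longleftrightarrow> i = j \<and> (i = 0 \<or> d = d')"
  by (auto simp: path_vtx_def)

text \<open>Explicit description of the transitive closure of G (proved in trancl_nc_graph): a vertex
  of a path reaches the later vertices of the same path and the elements of its set.\<close>

definition nc_reach :: "nat \<Rightarrow> 'a set set \<Rightarrow> 'a vtx \<Rightarrow> 'a vtx \<Rightarrow> bool" where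
  "nc_reach k D x y \<longleftrightarrow>
     (\<exists>d\<in>D. \<exists>i j. i < j \<and> j \<le> k \<and> x = path_vtx k d i \<and> y = path_vtx k d j)
   \<or> (\<exists>d\<in>D. \<exists>i\<le>k. \<exists>t\<in>d. x = path_vtx k d i \<and> y = WT t)"

text \<open>The spanner built from a cover M: all path edges, all element edges, and the shortcuts
  a \<rightarrow> v_d for d \<in> M. With M = D it is the graph G itself.\<close>

definition cover_spanner :: "nat \<Rightarrow> 'a set set \<Rightarrow> 'a set set \<Rightarrow> ('a vtx \<times> 'a vtx) set" where
  "cover_spanner k D M =
     {(path_vtx k d i, path_vtx k d (Suc i)) | d i. d \<in> D \<and> i < k}
   \<union> {(VD d, WT t) | d t. d \<in> D \<and> t \<in> d}
   \<union> {(VA, VD d) | d. d \<in> M}"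

lemma cover_spanner_parts:
  "cover_spanner k D M =
     (\<lambda>(d, i). (path_vtx k d i, path_vtx k d (Suc i))) ` (D \<times> {..<k})
   \<union> (\<lambda>(d, t). (VD d, WT t)) ` Sigma D (\<lambda>d. d)
   \<union> (\<lambda>d. (VA, VD d)) ` M"
  unfolding cover_spanner_def by auto

lemma nc_reach_irrefl: "\<not> nc_reach k D x x"
  by (auto simp: nc_reach_def path_vtx_eq_iff)

lemma nc_reach_into_VA: "0 < k \<Longrightarrow> \<not> nc_reach k D a VA"
  by (auto simp: nc_reach_def)

lemma nc_reach_from_WT: "\<not> nc_reach k D (WT t) y"
  by (auto simp: nc_reach_def path_vtx_def)

lemma nc_reach_into_path:
  assumes "nc_reach k D a (path_vtx k d j)" and "0 < j" and "j \<le> k"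
  shows "\<exists>i<j. a = path_vtx k d i"
  using assms by (auto simp: nc_reach_def path_vtx_eq_iff)

lemma nc_reach_from_VD:
  assumes "nc_reach k D (VD d) y" and "0 < k"
  shows "d \<in> D \<and> (\<exists>t\<in>d. y = WT t)"
  using assms by (auto simp: nc_reach_def path_vtx_eq_iff)

lemma nc_reach_into_WT: "nc_reach k D a (WT t) \<Longrightarrow> \<exists>d\<in>D. t \<in> d"
  by (auto simp: nc_reach_def)

lemma nc_reach_step:
  assumes "nc_reach k D x y" and "(y, z) \<in> cover_spanner k D D" and "0 < k"
  shows "nc_reach k D x z"
  using assms unfolding cover_spanner_def nc_reach_def
  by (auto simp: path_vtx_eq_iff) (metis Suc_leI less_SucI)

lemma finite_cover_sizes:
  assumes "finite D"
  shows "finite {card M | M. M \<subseteq> D \<and> \<Union>M = X}"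
proof -
  have "{card M | M. M \<subseteq> D \<and> \<Union>M = X} \<subseteq> card ` Pow D" by auto
  then show ?thesis using assms finite_subset by blast
qed

lemma opt_3nc_le:
  assumes "finite D" and "M \<subseteq> D" and "\<Union>M = X"
  shows "opt_3nc D X \<le> card M"
  unfolding opt_3nc_def using assms finite_cover_sizes by (auto intro: Min_le)

lemma opt_3nc_attained:
  assumes "finite D" and "\<Union>D = X"
  obtains M where "M \<subseteq> D" and "\<Union>M = X" and "card M = opt_3nc D X"
proof -
  note finite_cover_sizes[OF assms(1), of X]
  moreover have "card D \<in> {card M | M. M \<subseteq> D \<and> \<Union>M = X}" using assms(2) by auto
  ultimately have "opt_3nc D X \<in> {card M | M. M \<subseteq> D \<and> \<Union>M = X}"
    unfolding opt_3nc_def by (intro Min_in) auto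
  then show ?thesis using that by auto
qed

text \<open>The setting of the theorem; of the 3NodeCover restrictions only finiteness matters.\<close>

locale nc_setting =
  fixes k :: nat and D :: "'a set set" and X :: "'a set"
  assumes k_ge_2: "2 \<le> k"
    and finite_D: "finite D"
    and finite_sets: "\<And>d. d \<in> D \<Longrightarrow> finite d"
    and union_D: "\<Union>D = X"
begin

lemma k_pos: "0 < k"
  using k_ge_2 by simp

lemma path_edge_in_cover_spanner:
  "d \<in> D \<Longrightarrow> i < k \<Longrightarrow> (path_vtx k d i, path_vtx k d (Suc i)) \<in> cover_spanner k D M"
  unfolding cover_spanner_def by blast

lemma nc_graph_eq_cover_spanner: "nc_graph k D X = cover_spanner k D D"
proof
  show "nc_graph k D X \<subseteq> cover_spanner k D D"
  proof
    fix e assume "e \<in> nc_graph k D X"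
    then consider (elem) d t where "e = (VD d, WT t)" "d \<in> D" "t \<in> d"
      | (root) d where "e = (VA, VD d)" "d \<in> D"
      | (path) d i where "e = (path_vtx k d i, path_vtx k d (Suc i))" "d \<in> D" "i < k"
      unfolding nc_graph_def
    proof (elim UnE CollectE exE conjE)
      fix d i assume "e = (PV d i, PV d (Suc i))" "d \<in> D" "1 \<le> i" "Suc i \<le> k - 1"
      then show thesis using path[of d i] by (simp add: path_vtx_def)
    next
      fix d assume "e = (VA, PV d 1)" "d \<in> D"
      then show thesis using path[of d 0] k_ge_2 by (simp add: path_vtx_def)
    next
      fix d assume "e = (PV d (k - 1), VD d)" "d \<in> D"
      then show thesis using path[of d "k - 1"] k_ge_2 by (simp add: path_vtx_def)
    qed (use elem root in auto)
    then show "e \<in> cover_spanner k D D"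
      by cases (auto simp: cover_spanner_def)
  qed
  show "cover_spanner k D D \<subseteq> nc_graph k D X"
  proof
    fix e assume "e \<in> cover_spanner k D D"
    then consider (path) d i where "e = (path_vtx k d i, path_vtx k d (Suc i))" "d \<in> D" "i < k"
      | (other) "e \<in> {(VD d, WT t) | d t. d \<in> D \<and> t \<in> d} \<union> {(VA, VD d) | d. d \<in> D}"
      unfolding cover_spanner_def by blast
    then show "e \<in> nc_graph k D X"
    proof cases
      case path
      then consider "i = 0" | "0 < i" "Suc i < k" | "Suc i = k" by linarith
      then show ?thesis
        using path k_ge_2 by cases (auto simp: nc_graph_def path_vtx_def)
    qed (use union_D in \<open>auto simp: nc_graph_def\<close>)
  qed
qed

lemma cover_spanner_path:
  assumes "d \<in> D" and "i \<le> j" and "j \<le> k"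
  shows "(path_vtx k d i, path_vtx k d j) \<in> cover_spanner k D M ^^ (j - i)"
  using assms(2,3)
proof (induction j)
  case (Suc j)
  show ?case
  proof (cases "i = Suc j")
    case False
    then have "(path_vtx k d i, path_vtx k d j) \<in> cover_spanner k D M ^^ (j - i)"
      using Suc by simp
    moreover have "(path_vtx k d j, path_vtx k d (Suc j)) \<in> cover_spanner k D M"
      using path_edge_in_cover_spanner assms(1) Suc.prems by simp
    ultimately have "(path_vtx k d i, path_vtx k d (Suc j)) \<in> cover_spanner k D M ^^ Suc (j - i)"
      by (rule relpow_Suc_I)
    then show ?thesis using False Suc.prems by (simp add: Suc_diff_le)
  qed simp
qed simp

lemma cover_spanner_reach:
  assumes "M \<subseteq> D" and "\<Union>M = X" and "nc_reach k D x y"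
  shows "\<exists>j\<le>k. (x, y) \<in> cover_spanner k D M ^^ j"
  using assms(3) unfolding nc_reach_def
proof (elim disjE bexE exE conjE)
  fix d i j assume "d \<in> D" "i < j" "j \<le> k" "x = path_vtx k d i" "y = path_vtx k d j"
  then show ?thesis using cover_spanner_path[of d i j M] by (intro exI[of _ "j - i"]) simp
next
  fix d i t assume d: "d \<in> D" "t \<in> d" and i: "i \<le> k" and xy: "x = path_vtx k d i" "y = WT t"
  have edge: "(VD d', WT t) \<in> cover_spanner k D M" if "d' \<in> D" "t \<in> d'" for d'
    using that unfolding cover_spanner_def by blast
  show ?thesis
  proof (cases "i = 0")
    case True
    \<comment> \<open>From the root, go through a set of the cover containing t.\<close>
    obtain d' where "d' \<in> M" "t \<in> d'" using assms(2) d union_D by blast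
    then have "(VA, VD d') \<in> cover_spanner k D M" "(VD d', WT t) \<in> cover_spanner k D M"
      using edge assms(1) unfolding cover_spanner_def by blast+
    then have "(x, y) \<in> cover_spanner k D M ^^ 2"
      using True xy by (auto simp: numeral_2_eq_2 relpow_Suc_I2)
    then show ?thesis using k_ge_2 by blast
  next
    case False
    \<comment> \<open>From inside the path, run to its end v_d and take the element edge.\<close>
    have "(x, VD d) \<in> cover_spanner k D M ^^ (k - i)"
      using cover_spanner_path[OF d(1) i, of M] xy k_pos by simp
    then have "(x, y) \<in> cover_spanner k D M ^^ Suc (k - i)"
      using relpow_Suc_I edge[OF d] xy by metis
    then show ?thesis using False i by (intro exI[of _ "Suc (k - i)"]) simp
  qed
qed

lemma cover_spanner_edge_reach:
  assumes "(a, b) \<in> cover_spanner k D M" and "M \<subseteq> D"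
  shows "nc_reach k D a b"
proof -
  consider (path) d i where "a = path_vtx k d i" "b = path_vtx k d (Suc i)" "d \<in> D" "i < k"
    | (elem) d t where "a = path_vtx k d k" "b = WT t" "d \<in> D" "t \<in> d"
    | (root) d where "a = path_vtx k d 0" "b = path_vtx k d k" "d \<in> D"
    using assms k_pos unfolding cover_spanner_def by auto
  then show ?thesis
  proof cases
    case path
    then show ?thesis unfolding nc_reach_def by (metis Suc_leI lessI)
  next
    case elem
    then show ?thesis unfolding nc_reach_def by blast
  next
    case root
    then show ?thesis unfolding nc_reach_def using k_pos by blast
  qed
qed

lemma trancl_nc_graph: "(x, y) \<in> (nc_graph k D X)\<^sup>+ \<longleftrightarrow> nc_reach k D x y"
proof
  assume "(x, y) \<in> (nc_graph k D X)\<^sup>+"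
  then show "nc_reach k D x y"
    unfolding nc_graph_eq_cover_spanner
    by (induction rule: trancl_induct) (auto intro: cover_spanner_edge_reach nc_reach_step k_pos)
next
  assume "nc_reach k D x y"
  moreover obtain j where j: "(x, y) \<in> cover_spanner k D D ^^ j"
    using cover_spanner_reach[of D] union_D calculation by blast
  ultimately have "j \<noteq> 0" using nc_reach_irrefl[of k D x] by (cases j) auto
  with j show "(x, y) \<in> (nc_graph k D X)\<^sup>+"
    unfolding nc_graph_eq_cover_spanner using trancl_power by blast
qed

lemma cover_spanner_is_spanner:
  assumes "M \<subseteq> D" and "\<Union>M = X"
  shows "is_tc_spanner (nc_graph k D X) k (cover_spanner k D M)"
  unfolding is_tc_spanner_def
  using cover_spanner_edge_reach[OF _ assms(1)] cover_spanner_reach[OF assms]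
  by (auto simp: trancl_nc_graph)

lemma cover_spanner_card:
  assumes "M \<subseteq> D"
  shows "card (cover_spanner k D M) \<le> card M + k * card D + (\<Sum>d\<in>D. card d)"
proof -
  let ?path = "(\<lambda>(d, i). (path_vtx k d i, path_vtx k d (Suc i))) ` (D \<times> {..<k})"
  let ?elem = "(\<lambda>(d, t). (VD d, WT t)) ` Sigma D (\<lambda>d. d)"
  let ?root = "(\<lambda>d. (VA :: 'a vtx, VD d)) ` M"
  have parts: "cover_spanner k D M = ?path \<union> ?elem \<union> ?root"
    by (rule cover_spanner_parts)
  have "card (cover_spanner k D M) \<le> card (?path \<union> ?elem) + card ?root"
    unfolding parts by (rule card_Un_le)
  also have "\<dots> \<le> card ?path + card ?elem + card ?root"
    using card_Un_le[of ?path ?elem] by simp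
  also have "\<dots> \<le> k * card D + (\<Sum>d\<in>D. card d) + card M"
  proof (intro add_mono)
    show "card ?path \<le> k * card D"
      using card_image_le[of "D \<times> {..<k}"] finite_D by (simp add: card_cartesian_product mult.commute)
    show "card ?elem \<le> (\<Sum>d\<in>D. card d)"
      using card_image_le[of "Sigma D (\<lambda>d. d)"] finite_D finite_sets by (simp add: card_SigmaI)
    show "card ?root \<le> card M"
      using card_image_le finite_subset[OF assms finite_D] by blast
  qed
  finally show ?thesis by simp
qed

lemma finite_nc_graph: "finite (nc_graph k D X)"
  unfolding nc_graph_eq_cover_spanner cover_spanner_parts
  using finite_D finite_sets by blast

lemma finite_spanner_sizes: "finite {card H | H. is_tc_spanner (nc_graph k D X) k H}"
proof -
  have "{card H | H. is_tc_spanner (nc_graph k D X) k H} \<subseteq> {..card ((nc_graph k D X)\<^sup>+)}"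
    using finite_nc_graph by (auto simp: is_tc_spanner_def intro: card_mono)
  then show ?thesis using finite_subset by blast
qed

definition block :: "'a set \<Rightarrow> 'a vtx set" where
  "block d = path_vtx k d ` {1..k}"

lemma card_block: "card (block d) = k"
proof -
  have "inj_on (path_vtx k d) {1..k}" by (auto simp: inj_on_def path_vtx_eq_iff)
  then show ?thesis unfolding block_def by (simp add: card_image)
qed

end

locale nc_spanner = nc_setting k D X for k and D :: "'a set set" and X +
  fixes H :: "('a vtx \<times> 'a vtx) set"
  assumes spanner: "is_tc_spanner (nc_graph k D X) k H"
begin

lemma H_sub_trancl: "H \<subseteq> (nc_graph k D X)\<^sup>+"
  using spanner unfolding is_tc_spanner_def by blast

lemma H_reach: "(a, b) \<in> H \<Longrightarrow> nc_reach k D a b"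
  using H_sub_trancl trancl_nc_graph by blast

lemma H_trancl_reach: "(a, b) \<in> H\<^sup>+ \<Longrightarrow> nc_reach k D a b"
proof -
  assume "(a, b) \<in> H\<^sup>+"
  then have "(a, b) \<in> ((nc_graph k D X)\<^sup>+)\<^sup>+" using trancl_mono H_sub_trancl by blast
  then show ?thesis using trancl_nc_graph by simp
qed

lemma finite_H: "finite H"
  using spanner finite_nc_graph finite_subset finite_trancl unfolding is_tc_spanner_def by blast

lemma acyclic_H: "acyclic H"
  unfolding acyclic_def using H_trancl_reach nc_reach_irrefl by blast

lemma H_path: "nc_reach k D x y \<Longrightarrow> \<exists>j\<le>k. (x, y) \<in> H ^^ j"
  using spanner trancl_nc_graph unfolding is_tc_spanner_def by blast

lemma H_last_edge:
  assumes "nc_reach k D x y"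
  obtains j w where "j < k" and "(x, w) \<in> H ^^ j" and "(w, y) \<in> H"
proof -
  obtain j where "j \<le> k" "(x, y) \<in> H ^^ j" using H_path assms by blast
  moreover have "j \<noteq> 0" using calculation assms nc_reach_irrefl[of k D x] by (cases j) auto
  ultimately obtain i where "Suc i \<le> k" "(x, y) \<in> H ^^ Suc i" using not0_implies_Suc by blast
  then show ?thesis using that by (meson Suc_le_lessD relpow_Suc_E)
qed

definition in_edges :: "'a set \<Rightarrow> ('a vtx \<times> 'a vtx) set" where
  "in_edges d = {e \<in> H. snd e \<in> block d}"

lemma finite_in_edges: "finite (in_edges d)"
  using finite_H unfolding in_edges_def by simp

text \<open>Every block vertex is reachable from a, so it has an incoming H-edge; hence each
  block receives at least k edges.\<close>

lemma block_covered_by_in_edges: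
  assumes "d \<in> D"
  shows "snd ` in_edges d = block d"
proof
  show "block d \<subseteq> snd ` in_edges d"
  proof
    fix x assume x: "x \<in> block d"
    then obtain j where "x = path_vtx k d j" "1 \<le> j" "j \<le> k" unfolding block_def by auto
    then have "nc_reach k D VA x"
      unfolding nc_reach_def using assms by (metis path_vtx_0 less_le_trans zero_less_one)
    then obtain w where "(w, x) \<in> H" by (rule H_last_edge)
    with x show "x \<in> snd ` in_edges d" unfolding in_edges_def by force
  qed
qed (auto simp: in_edges_def)

lemma card_in_edges: "d \<in> D \<Longrightarrow> k \<le> card (in_edges d)"
  using card_image_le[OF finite_in_edges, of snd d] block_covered_by_in_edges card_block by simp

text \<open>Key step: if the block of d receives exactly k edges, every block vertex has a unique
  in-edge, so by path_length_ge_card any H-path from a to v_d has length at least k.\<close>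

lemma tight_block_far:
  assumes "d \<in> D" and "card (in_edges d) = k" and "(VA, VD d) \<in> H ^^ j"
  shows "k \<le> j"
proof -
  have inj: "inj_on snd (in_edges d)"
    using eq_card_imp_inj_on[OF finite_in_edges] block_covered_by_in_edges[OF assms(1)]
      card_block assms(2) by metis
  have "card (block d) \<le> j"
  proof (rule path_length_ge_card[where r = VA and v = "VD d" and H = H])
    show "finite (block d)" "acyclic H" "(VA, VD d) \<in> H ^^ j"
      using acyclic_H assms(3) by (auto simp: block_def)
    show "VA \<notin> block d" using k_pos by (auto simp: block_def)
    show "VD d \<in> block d"
      unfolding block_def using k_pos by (auto intro!: image_eqI[where x = k])
    show "(a, VA) \<notin> H" for a using H_reach nc_reach_into_VA k_pos by blast
    show "a = b" if "x \<in> block d" "(a, x) \<in> H" "(b, x) \<in> H" for x a b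
      using inj_onD[OF inj, of "(a, x)" "(b, x)"] that unfolding in_edges_def by auto
    show "a \<in> block d \<or> a = VA" if x: "x \<in> block d" and ax: "(a, x) \<in> H" for x a
    proof -
      obtain j where "x = path_vtx k d j" "1 \<le> j" "j \<le> k" using x unfolding block_def by auto
      then obtain i where "i < j" "a = path_vtx k d i"
        using nc_reach_into_path H_reach[OF ax] by (metis less_le_trans zero_less_one)
      then show ?thesis using \<open>j \<le> k\<close> unfolding block_def by (cases "i = 0") auto
    qed
    show "(y, VD d) \<in> H\<^sup>*" if y: "y \<in> block d" for y
    proof -
      obtain i where i: "y = path_vtx k d i" "1 \<le> i" "i \<le> k" using y unfolding block_def by auto
      show ?thesis
      proof (cases "i = k")
        case False
        then have "nc_reach k D y (VD d)"
          unfolding nc_reach_def using i assms(1) k_pos by (metis path_vtx_top le_neq_implies_less order.refl)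
        then show ?thesis using H_path relpow_imp_rtrancl by blast
      qed (use i k_pos in simp)
    qed
  qed
  then show ?thesis using card_block by simp
qed

text \<open>Second edge class: element edges v_d \<rightarrow> w_t. All of them are forced, since w_t can be
  reached from v_d only directly.\<close>

definition elem_edges :: "('a vtx \<times> 'a vtx) set" where
  "elem_edges = {e \<in> H. \<exists>d t. e = (VD d, WT t)}"

lemma elem_edges_eq: "elem_edges = (\<lambda>(d, t). (VD d, WT t)) ` Sigma D (\<lambda>d. d)"
proof
  show "elem_edges \<subseteq> (\<lambda>(d, t). (VD d, WT t)) ` Sigma D (\<lambda>d. d)"
    unfolding elem_edges_def using H_reach nc_reach_from_VD k_pos by fastforce
  show "(\<lambda>(d, t). (VD d, WT t)) ` Sigma D (\<lambda>d. d) \<subseteq> elem_edges"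
  proof clarify
    fix d t assume "d \<in> D" "t \<in> d"
    then have "nc_reach k D (VD d) (WT t)"
      unfolding nc_reach_def using k_pos by (metis path_vtx_top order.refl)
    then obtain j w where path: "(VD d, w) \<in> H ^^ j" and last: "(w, WT t) \<in> H"
      by (rule H_last_edge)
    \<comment> \<open>v_d only reaches element vertices, which have no out-edges, so the path is one edge.\<close>
    have "w = VD d"
    proof (rule ccontr)
      assume "w \<noteq> VD d"
      then have "nc_reach k D (VD d) w"
        using path relpow_imp_rtrancl H_trancl_reach by (metis rtranclD)
      then obtain t' where "w = WT t'" using nc_reach_from_VD k_pos by blast
      then show False using H_reach[OF last] nc_reach_from_WT by metis
    qed
    then show "(VD d, WT t) \<in> elem_edges" using last unfolding elem_edges_def by simp
  qed
qed

lemma card_elem_edges: "card elem_edges = (\<Sum>d\<in>D. card d)"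
proof -
  have "inj_on (\<lambda>(d, t). (VD d, WT t)) (Sigma D (\<lambda>d. d))" by (auto simp: inj_on_def)
  then have "card elem_edges = card (Sigma D (\<lambda>d. d))" by (simp add: elem_edges_eq card_image)
  also have "\<dots> = (\<Sum>d\<in>D. card d)" using finite_D finite_sets by (simp add: card_SigmaI)
  finally show ?thesis .
qed

definition shortcut_edges :: "('a vtx \<times> 'a vtx) set" where
  "shortcut_edges = {e \<in> H. snd e \<in> range WT \<and> fst e \<notin> range VD}"

definition heavy_sets :: "'a set set" where
  "heavy_sets = {d \<in> D. k < card (in_edges d)}"

text \<open>Each block contributes k edges, and each heavy block at least one more.\<close>

lemma sum_in_edges: "k * card D + card heavy_sets \<le> (\<Sum>d\<in>D. card (in_edges d))"
proof -
  have "k * card D + card heavy_sets = (\<Sum>d\<in>D. k + (if d \<in> heavy_sets then 1 else 0))"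
    using finite_D by (simp add: sum.distrib heavy_sets_def sum.inter_filter[symmetric])
  also have "\<dots> \<le> (\<Sum>d\<in>D. card (in_edges d))"
    using card_in_edges by (intro sum_mono) (auto simp: heavy_sets_def)
  finally show ?thesis .
qed

lemma edge_classes_card:
  "(\<Sum>d\<in>D. card (in_edges d)) + card elem_edges + card shortcut_edges \<le> card H"
proof -
  have disj: "in_edges d \<inter> in_edges d' = {}" if "d \<noteq> d'" for d d'
    using that unfolding in_edges_def block_def by (auto simp: path_vtx_eq_iff)
  let ?U = "\<Union>d\<in>D. in_edges d"
  have fin: "finite ?U" "finite elem_edges" "finite shortcut_edges"
    using finite_D finite_in_edges finite_H unfolding elem_edges_def shortcut_edges_def by auto
  have "(\<Sum>d\<in>D. card (in_edges d)) + card elem_edges + card shortcut_edges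
      = card ?U + card elem_edges + card shortcut_edges"
    using finite_D finite_in_edges disj by (simp add: card_UN_disjoint)
  also have "\<dots> = card (?U \<union> elem_edges \<union> shortcut_edges)"
  proof -
    have "?U \<inter> elem_edges = {}" "(?U \<union> elem_edges) \<inter> shortcut_edges = {}"
      unfolding in_edges_def elem_edges_def shortcut_edges_def block_def by auto
    then show ?thesis using fin by (simp add: card_Un_disjoint)
  qed
  also have "\<dots> \<le> card H"
    by (rule card_mono[OF finite_H]) (auto simp: in_edges_def elem_edges_def shortcut_edges_def)
  finally show ?thesis .
qed

text \<open>An element hit by no shortcut edge lies in a heavy set: the last edge of a short
  path from a to w_t starts at some v_d with t \<in> d, and d cannot be tight.\<close>

lemma unshortcut_element_in_heavy_set:
  assumes "t \<in> X" and no_shortcut: "\<And>e. e \<in> shortcut_edges \<Longrightarrow> snd e \<noteq> WT t"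
  shows "\<exists>d\<in>heavy_sets. t \<in> d"
proof -
  obtain d where "d \<in> D" "t \<in> d" using assms(1) union_D by blast
  then have "nc_reach k D VA (WT t)"
    unfolding nc_reach_def by (metis path_vtx_0 le0)
  then obtain j w where "j < k" and path: "(VA, w) \<in> H ^^ j" and last: "(w, WT t) \<in> H"
    by (rule H_last_edge)
  have "w \<in> range VD"
    using last no_shortcut[of "(w, WT t)"] unfolding shortcut_edges_def by auto
  then obtain d' where w: "w = VD d'" by blast
  have "d' \<in> D" "t \<in> d'" using nc_reach_from_VD H_reach[OF last] w k_pos by auto
  moreover have "card (in_edges d') \<noteq> k"
    using tight_block_far \<open>d' \<in> D\<close> path w \<open>j < k\<close> by fastforce
  ultimately show ?thesis
    using card_in_edges[of d'] unfolding heavy_sets_def by fastforce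
qed

lemma repaired_cover:
  obtains M where "M \<subseteq> D" and "\<Union>M = X" and "card M \<le> card heavy_sets + card shortcut_edges"
proof -
  have "\<forall>e\<in>shortcut_edges. \<exists>d\<in>D. snd e \<in> WT ` d"
    unfolding shortcut_edges_def using H_reach nc_reach_into_WT by fastforce
  then obtain g where g: "\<And>e. e \<in> shortcut_edges \<Longrightarrow> g e \<in> D \<and> snd e \<in> WT ` g e"
    by metis
  define M where "M = heavy_sets \<union> g ` shortcut_edges"
  have "M \<subseteq> D" unfolding M_def heavy_sets_def using g by auto
  moreover have "card M \<le> card heavy_sets + card shortcut_edges"
  proof -
    have "finite shortcut_edges" using finite_H unfolding shortcut_edges_def by simp
    then show ?thesis
      unfolding M_def using card_Un_le[of heavy_sets "g ` shortcut_edges"] card_image_le[of shortcut_edges g]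
      by linarith
  qed
  moreover have "X \<subseteq> \<Union>M"
  proof
    fix t assume "t \<in> X"
    show "t \<in> \<Union>M"
    proof (cases "\<exists>e\<in>shortcut_edges. snd e = WT t")
      case True
      then show ?thesis using g unfolding M_def by fastforce
    next
      case False
      then show ?thesis using unshortcut_element_in_heavy_set[OF \<open>t \<in> X\<close>] unfolding M_def by blast
    qed
  qed
  ultimately show ?thesis using that union_D by blast
qed

lemma spanner_card_lower: "opt_3nc D X + k * card D + (\<Sum>d\<in>D. card d) \<le> card H"
proof -
  obtain M where "M \<subseteq> D" "\<Union>M = X" and M: "card M \<le> card heavy_sets + card shortcut_edges"
    by (rule repaired_cover)
  then have "opt_3nc D X \<le> card M" using opt_3nc_le finite_D by blast
  then show ?thesis
    using M sum_in_edges edge_classes_card card_elem_edges by linarith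
qed

end

theorem mainTheorem15:
  fixes D :: "'a set set" and X :: "'a set" and k n :: nat
  assumes "k \<ge> 2"
    and "is_3nc_instance D X"
    and "card D = n"
    and "\<Union>D = X"
  shows "S_k k (nc_graph k D X) = opt_3nc D X + k * n + (\<Sum>d\<in>D. card d)"
proof -
  interpret nc_setting k D X
    using assms(1,2,4) by unfold_locales (auto simp: is_3nc_instance_def)
  let ?sizes = "{card H | H. is_tc_spanner (nc_graph k D X) k H}"
  let ?bound = "opt_3nc D X + k * n + (\<Sum>d\<in>D. card d)"
  obtain M where M: "M \<subseteq> D" "\<Union>M = X" "card M = opt_3nc D X"
    using opt_3nc_attained finite_D assms(4) by blast
  have in_sizes: "card (cover_spanner k D M) \<in> ?sizes"
    using cover_spanner_is_spanner[OF M(1,2)] by blast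
  have "card (cover_spanner k D M) \<le> ?bound"
    using cover_spanner_card[OF M(1)] M(3) assms(3) by simp
  then have "S_k k (nc_graph k D X) \<le> ?bound"
    unfolding S_k_def using Min_le[OF finite_spanner_sizes in_sizes] by linarith
  moreover have "?bound \<le> S_k k (nc_graph k D X)"
    unfolding S_k_def
  proof (rule Min.boundedI[OF finite_spanner_sizes])
    show "?sizes \<noteq> {}" using in_sizes by blast
    fix c assume "c \<in> ?sizes"
    then obtain H where "c = card H" "is_tc_spanner (nc_graph k D X) k H" by blast
    then interpret nc_spanner k D X H by unfold_locales
    show "?bound \<le> c" using spanner_card_lower assms(3) \<open>c = card H\<close> by simp
  qed
  ultimately show ?thesis by (rule antisym)
qed

end
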